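(* In the setting described in the context, set $P_0=S_{\infty 0}S_{\infty 0}^*$ and $P_n=W_\infty^nP_0W_\infty^{*n}$ for $n\in\mathbb Z$. Then (1) $\{P_n:n\in\mathbb Z\}$ is a decreasing family of projections in $\mathcal B(\mathcal H_\infty)$; (2) the strong operator limit $P_{+\infty}:=\lim_{n\to+\infty}P_n$ exists; (3) $\lim_{n\to-\infty}P_n=1$ in the strong operator topology; (4) $\{P_n:n\in\mathbb Z\cup\{+\infty\}\}\subset\pi_\infty(\mathcal A_\infty)'$.
   Context: $\mathcal A$ is a unital C*-algebra, $\alpha$ an injective unital $*$-endomorphism; $\mathcal A_\infty$ is the C*-inductive limit of $\mathcal A\xrightarrow{\alpha}\mathcal A\xrightarrow{\alpha}\cdots$ with canonical maps $\varphi_{\infty n}$ ($\varphi_{\infty,n+1}\circ\alpha=\varphi_{\infty n}$), and $\alpha_\infty$ the automorphism with $\alpha_\infty(\varphi_{\infty n}(a))=\varphi_{\infty n}(\alpha(a))$. $(\mathcal H,\pi,W)$ is a covariant representation of $(\mathcal A,\alpha)$: $\pi$ a representation, $W$ an isometry, $\pi(\alpha(a))W=W\pi(a)$, $W^kW^{*k}\in\pi(\mathcal A)'$ for all $k\in\mathbb N$. $\mathcal H_\infty$ is the Hilbert space inductive limit of $\mathcal H\xrightarrow{W}\mathcal H\xrightarrow{W}\cdots$: isometries $S_{\infty n}:\mathcal H\to\mathcal H_\infty$ ($n\ge0$) with $S_{\infty,n+1}W=S_{\infty n}$ and $\bigcup_nS_{\infty n}\mathcal H$ dense. $W_\infty$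 is the unitary on $\mathcal H_\infty$ determined by $W_\infty S_{\infty n}=S_{\infty,n-1}$ for $n\ge1$ (hence $W_\infty S_{\infty 0}=S_{\infty 0}W$), and $\pi_\infty$ is the representation of $\mathcal A_\infty$ on $\mathcal H_\infty$ determined by $\pi_\infty(\varphi_{\infty n}(a))S_{\infty n}=S_{\infty n}\pi(a)$ for all $n\ge0$, $a\in\mathcal A$; it satisfies $\pi_\infty(\alpha_\infty(x))=W_\infty\pi_\infty(x)W_\infty^*$. *)

theory Defs
  imports "HOL-Analysis.Analysis"
begin

class cvector = real_vector +
  fixes scaleC :: "complex \<Rightarrow> 'a \<Rightarrow> 'a" (infixr \<open>*\<^sub>C\<close> 75)
  assumes scaleC_add_right: "a *\<^sub>C (x + y) = a *\<^sub>C x + a *\<^sub>C y"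
    and scaleC_add_left: "(a + b) *\<^sub>C x = a *\<^sub>C x + b *\<^sub>C x"
    and scaleC_scaleC: "a *\<^sub>C (b *\<^sub>C x) = (a * b) *\<^sub>C x"
    and scaleC_one: "1 *\<^sub>C x = x"
    and scaleR_scaleC: "scaleR r x = complex_of_real r *\<^sub>C x"

class cnormed = cvector + real_normed_vector +
  assumes norm_scaleC: "norm (a *\<^sub>C x) = cmod a * norm x"

class chilbert = cnormed + banach +
  fixes cinner :: "'a \<Rightarrow> 'a \<Rightarrow> complex"
  assumes cinner_add_left: "cinner (x + y) z = cinner x z + cinner y z"
    and cinner_scaleC_left: "cinner (a *\<^sub>C x) y = a * cinner x y"
    and cinner_commute: "cinner y x = cnj (cinner x y)"
    and cinner_self: "cinner x x = complex_of_real ((norm x)\<^sup>2)"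

class cstar_algebra = cnormed + banach + real_normed_algebra_1 +
  fixes invol :: "'a \<Rightarrow> 'a"
  assumes invol_invol: "invol (invol x) = x"
    and invol_add: "invol (x + y) = invol x + invol y"
    and invol_scaleC: "invol (a *\<^sub>C x) = cnj a *\<^sub>C invol x"
    and invol_mult: "invol (x * y) = invol y * invol x"
    and mult_scaleC_left: "(a *\<^sub>C x) * y = a *\<^sub>C (x * y)"
    and mult_scaleC_right: "x * (a *\<^sub>C y) = a *\<^sub>C (x * y)"
    and cstar_identity: "norm (invol x * x) = (norm x)\<^sup>2"

definition clinear :: "('a::cvector \<Rightarrow> 'b::cvector) \<Rightarrow> bool" where
  "clinear f \<longleftrightarrow> (\<forall>x y. f (x + y) = f x + f y) \<and> (\<forall>a x. f (a *\<^sub>C x) = a *\<^sub>C f x)"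

definition cbounded :: "('a::cnormed \<Rightarrow> 'b::cnormed) \<Rightarrow> bool" where
  "cbounded f \<longleftrightarrow> clinear f \<and> (\<exists>K. \<forall>x. norm (f x) \<le> norm x * K)"

definition cadj :: "('a::chilbert \<Rightarrow> 'b::chilbert) \<Rightarrow> 'b \<Rightarrow> 'a" where
  "cadj T = (SOME T'. \<forall>x y. cinner (T x) y = cinner x (T' y))"

definition isometry :: "('a::chilbert \<Rightarrow> 'b::chilbert) \<Rightarrow> bool" where
  "isometry T \<longleftrightarrow> cbounded T \<and> (\<forall>x. norm (T x) = norm x)"

definition unitary :: "('a::chilbert \<Rightarrow> 'a) \<Rightarrow> bool" where
  "unitary U \<longleftrightarrow> cbounded U \<and> cadj U \<circ> U = id \<and> U \<circ> cadj U = id"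

definition is_projection :: "('a::chilbert \<Rightarrow> 'a) \<Rightarrow> bool" where
  "is_projection P \<longleftrightarrow> cbounded P \<and> P \<circ> P = P \<and> cadj P = P"

text \<open>Operator order: \<open>A \<le> B\<close> iff \<open>\<langle>(B - A)x, x\<rangle> \<ge> 0\<close> for all x.\<close>
definition op_le :: "('a::chilbert \<Rightarrow> 'a) \<Rightarrow> ('a \<Rightarrow> 'a) \<Rightarrow> bool" where
  "op_le A B \<longleftrightarrow> (\<forall>x. Im (cinner (A x) x) = Im (cinner (B x) x)
                      \<and> Re (cinner (A x) x) \<le> Re (cinner (B x) x))"

definition commutant :: "('a::chilbert \<Rightarrow> 'a) set \<Rightarrow> ('a \<Rightarrow> 'a) set" where
  "commutant M = {T. cbounded T \<and> (\<forall>A\<in>M. T \<circ> A = A \<circ> T)}"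

definition upow :: "('a::chilbert \<Rightarrow> 'a) \<Rightarrow> int \<Rightarrow> 'a \<Rightarrow> 'a" where
  "upow U n = (if 0 \<le> n then U ^^ nat n else cadj U ^^ nat (- n))"

definition unital_star_hom :: "('a::cstar_algebra \<Rightarrow> 'b::cstar_algebra) \<Rightarrow> bool" where
  "unital_star_hom f \<longleftrightarrow> clinear f \<and> (\<forall>x y. f (x * y) = f x * f y)
     \<and> (\<forall>x. f (invol x) = invol (f x)) \<and> f 1 = 1"

text \<open>A (bounded) *-representation of a C*-algebra on a Hilbert space.  Contractivity
  is automatic for *-homomorphisms of C*-algebras and is recorded explicitly.\<close>
definition representation :: "('a::cstar_algebra \<Rightarrow> 'h::chilbert \<Rightarrow> 'h) \<Rightarrow> bool" where
  "representation \<pi> \<longleftrightarrow>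
     (\<forall>a. cbounded (\<pi> a)) \<and>
     (\<forall>a v. norm (\<pi> a v) \<le> norm a * norm v) \<and>
     (\<forall>a b. \<pi> (a + b) = (\<lambda>v. \<pi> a v + \<pi> b v)) \<and>
     (\<forall>c a. \<pi> (c *\<^sub>C a) = (\<lambda>v. c *\<^sub>C \<pi> a v)) \<and>
     (\<forall>a b. \<pi> (a * b) = \<pi> a \<circ> \<pi> b) \<and>
     (\<forall>a. \<pi> (invol a) = cadj (\<pi> a))"

end

theory Submission
  imports Defs
begin

(* P_n is the range projection of the isometry V_n = W_inf^n S_0.  Since V_(n+1) = V_n W the ranges
   decrease, and since V_(-k) = S_k they exhaust the dense union of the ranges of the S_k, so
   P_n tends strongly to 1 as n tends to -infinity.  Decreasing projections converge strongly,
   because |P_m x - P_n x|^2 = |P_m x|^2 - |P_n x|^2 for m <= n.  Writing V_n = S_k W^j and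
   lifting to a common level, the range of V_n is invariant under pi_inf(phi_m(a)) because
   W^j W^j* commutes with pi; as the phi_m(a) form a dense *-closed set, P_n and then its strong
   limit lie in the commutant of pi_inf.  The Hilbert space classes come without adjoints; these
   are obtained from the Riesz representation theorem, via a norm-minimal point of a closed
   affine hyperplane. *)

section \<open>Complex Hilbert spaces\<close>

lemma scaleC_zero_left [simp]: "0 *\<^sub>C (x::'a::cvector) = 0"
  using scaleR_scaleC[of 0 x] by simp

lemma bounded_linear_scaleC: "bounded_linear (\<lambda>x::'a::cnormed. c *\<^sub>C x)"
proof (rule bounded_linear_intro[where K="cmod c"])
  show "c *\<^sub>C (x + y) = c *\<^sub>C x + c *\<^sub>C y" for x y :: 'a
    by (rule scaleC_add_right)
  show "c *\<^sub>C r *\<^sub>R x = r *\<^sub>R (c *\<^sub>C x)" for r and x :: 'a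
    by (simp only: scaleR_scaleC scaleC_scaleC mult.commute)
  show "norm (c *\<^sub>C x) \<le> norm x * cmod c" for x :: 'a
    by (simp add: norm_scaleC)
qed

lemma linear_cinner_left: "linear (\<lambda>x. cinner x (y::'a::chilbert))"
  by (rule linearI) (simp_all add: cinner_add_left scaleR_scaleC cinner_scaleC_left scaleR_conv_of_real)

lemma cinner_diff_left: "cinner (x - z) (y::'a::chilbert) = cinner x y - cinner z y"
  by (rule linear_diff[OF linear_cinner_left])

lemma cnj_cinner [simp]: "cnj (cinner x (y::'a::chilbert)) = cinner y x"
  by (metis cinner_commute)

lemma cinner_add_right: "cinner (x::'a::chilbert) (y + z) = cinner x y + cinner x z"
  by (subst cinner_commute) (simp add: cinner_add_left)

lemma cinner_scaleC_right: "cinner (x::'a::chilbert) (c *\<^sub>C y) = cnj c * cinner x y"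
  by (subst cinner_commute) (simp add: cinner_scaleC_left)

lemma cinner_diff_right: "cinner x (y - z::'a::chilbert) = cinner x y - cinner x z"
  by (subst cinner_commute) (simp add: cinner_diff_left)

lemma cinner_zero_right [simp]: "cinner (x::'a::chilbert) 0 = 0"
  by (subst cinner_commute) (simp add: linear_0[OF linear_cinner_left])

lemma Re_cinner_commute: "Re (cinner y x) = Re (cinner x (y::'a::chilbert))"
  by (subst cinner_commute) (simp del: cnj_cinner)

lemma power2_norm_eq_cinner: "(norm (x::'a::chilbert))\<^sup>2 = Re (cinner x x)"
  by (simp add: cinner_self)

lemma cinner_eqI: "(\<And>x. cinner x a = cinner x (b::'a::chilbert)) \<Longrightarrow> a = b"
  using cinner_self[of "a - b"] by (simp add: cinner_diff_right)

lemma cinner_eqI_left: "(\<And>y. cinner a y = cinner (b::'a::chilbert) y) \<Longrightarrow> a = b"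
  by (rule cinner_eqI) (metis cnj_cinner)

lemma power2_norm_add: "(norm (x + y))\<^sup>2 = (norm x)\<^sup>2 + (norm y)\<^sup>2 + 2 * Re (cinner x (y::'a::chilbert))"
  by (simp add: power2_norm_eq_cinner cinner_add_left cinner_add_right Re_cinner_commute[of x y])

lemma power2_norm_diff: "(norm (x - y))\<^sup>2 = (norm x)\<^sup>2 + (norm y)\<^sup>2 - 2 * Re (cinner x (y::'a::chilbert))"
  by (simp add: power2_norm_eq_cinner cinner_diff_left cinner_diff_right Re_cinner_commute[of x y])

lemma parallelogram_law:
  "(norm (x + y))\<^sup>2 + (norm (x - y))\<^sup>2 = 2 * (norm x)\<^sup>2 + 2 * (norm (y::'a::chilbert))\<^sup>2"
  by (simp add: power2_norm_add power2_norm_diff)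

lemma cnj_mult_self: "cnj c * c = complex_of_real ((cmod c)\<^sup>2)"
  by (metis complex_norm_square mult.commute of_real_power)

lemma cmod_cinner_le: "cmod (cinner x y) \<le> norm x * norm (y::'a::chilbert)"
proof (cases "y = 0")
  case False
  define c where "c = cinner x y"
  define t where "t = complex_of_real (inverse ((norm y)\<^sup>2)) * c"
  have "cmod t = cmod c / (norm y)\<^sup>2"
    unfolding t_def norm_mult norm_of_real by (simp add: field_simps)
  then have "(norm (t *\<^sub>C y))\<^sup>2 = (cmod c)\<^sup>2 / (norm y)\<^sup>2"
    using False by (simp add: norm_scaleC field_simps power2_eq_square)
  moreover have "Re (cinner x (t *\<^sub>C y)) = (cmod c)\<^sup>2 / (norm y)\<^sup>2"
    using False by (simp add: cinner_scaleC_right t_def mult.assoc cnj_mult_self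
        power2_eq_square flip: c_def)
  ultimately have "0 \<le> (norm x)\<^sup>2 - (cmod c)\<^sup>2 / (norm y)\<^sup>2"
    using power2_norm_diff[of x "t *\<^sub>C y"] zero_le_power2[of "norm (x - t *\<^sub>C y)"] by linarith
  then have "(cmod c)\<^sup>2 \<le> (norm x * norm y)\<^sup>2"
    using False by (simp add: field_simps power_mult_distrib)
  then show ?thesis
    unfolding c_def by (rule power2_le_imp_le) simp
qed simp

lemma Cauchy_if_midpoint_norms_ge:
  fixes v :: "nat \<Rightarrow> 'a::chilbert"
  assumes mid: "\<And>i j. 2 * d \<le> norm (v i + v j)" and lim: "(\<lambda>k. norm (v k)) \<longlonglongrightarrow> d"
  shows "Cauchy v"
proof (rule metric_CauchyI)
  fix e :: real
  assume "0 < e"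
  have "0 \<le> d"
    using lim by (rule LIMSEQ_le_const) simp
  define g where "g k = (norm (v k))\<^sup>2 - d\<^sup>2" for k
  have "g \<longlonglongrightarrow> d\<^sup>2 - d\<^sup>2"
    unfolding g_def by (intro tendsto_intros lim)
  then have "eventually (\<lambda>k. g k < e\<^sup>2 / 4) sequentially"
    using \<open>0 < e\<close> by (intro order_tendstoD(2)) auto
  then obtain M where M: "\<And>k. k \<ge> M \<Longrightarrow> g k < e\<^sup>2 / 4"
    unfolding eventually_sequentially by blast
  have sq: "(norm (v i - v j))\<^sup>2 \<le> 2 * g i + 2 * g j" for i j
  proof -
    have "(2 * d)\<^sup>2 \<le> (norm (v i + v j))\<^sup>2"
      using mid[of i j] \<open>0 \<le> d\<close> by (intro power_mono) auto
    then have "4 * d\<^sup>2 \<le> (norm (v i + v j))\<^sup>2"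
      by (simp add: power_mult_distrib)
    then show ?thesis
      using parallelogram_law[of "v i" "v j"] unfolding g_def by argo
  qed
  have "norm (v i - v j) < e" if "i \<ge> M" "j \<ge> M" for i j
  proof (rule power2_less_imp_less)
    show "(norm (v i - v j))\<^sup>2 < e\<^sup>2"
      using sq[of i j] M[OF that(1)] M[OF that(2)] by linarith
  qed (use \<open>0 < e\<close> in simp)
  then show "\<exists>M. \<forall>m\<ge>M. \<forall>n\<ge>M. dist (v m) (v n) < e"
    by (auto simp: dist_norm)
qed

lemma closed_midpoint_convex_has_min_norm:
  fixes C :: "'a::chilbert set"
  assumes "closed C" "C \<noteq> {}"
    and mid: "\<And>u v. u \<in> C \<Longrightarrow> v \<in> C \<Longrightarrow> (1/2) *\<^sub>R (u + v) \<in> C"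
  shows "\<exists>w\<in>C. \<forall>v\<in>C. norm w \<le> norm v"
proof -
  define d where "d = Inf (norm ` C)"
  have bdd: "bdd_below (norm ` C)"
    by (rule bdd_belowI[of _ 0]) auto
  have d_le: "d \<le> norm v" if "v \<in> C" for v
    unfolding d_def using bdd that by (simp add: cInf_lower)
  have "d \<in> closure (norm ` C)"
    unfolding d_def using assms(2) bdd by (intro closure_contains_Inf) auto
  then obtain r where r: "\<And>k. r k \<in> norm ` C" "r \<longlonglongrightarrow> d"
    unfolding closure_sequential by blast
  then have "\<forall>k. \<exists>u. u \<in> C \<and> r k = norm u"
    by blast
  then obtain v where v: "\<And>k. v k \<in> C" "\<And>k. r k = norm (v k)"
    by (auto dest!: choice)
  have lim: "(\<lambda>k. norm (v k)) \<longlonglongrightarrow> d"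
    using r(2) by (simp add: v(2)[symmetric])
  have "2 * d \<le> norm (v i + v j)" for i j
    using d_le[OF mid[OF v(1) v(1)], of i j] by simp
  then have "Cauchy v"
    using lim by (rule Cauchy_if_midpoint_norms_ge)
  then obtain w where w: "v \<longlonglongrightarrow> w"
    using Cauchy_convergent convergent_def by blast
  have "w \<in> C"
    using closed_sequentially[OF \<open>closed C\<close> _ w] v(1) by blast
  moreover have "norm w = d"
    using tendsto_norm[OF w] lim by (rule LIMSEQ_unique)
  ultimately show ?thesis
    using d_le by auto
qed

lemma cinner_eq_0_if_norm_le_add_scaleC:
  fixes w y :: "'a::chilbert"
  assumes min: "\<And>t. norm w \<le> norm (w + t *\<^sub>C y)"
  shows "cinner w y = 0"
proof (rule ccontr)
  assume "cinner w y \<noteq> 0"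
  define c where "c = cinner w y"
  define s where "s = 1 / ((norm y)\<^sup>2 + 1)"
  have "0 < (norm y)\<^sup>2 + 1"
    by (simp add: add_nonneg_pos)
  then have s: "0 < s" "s * (norm y)\<^sup>2 < 1"
    by (auto simp: s_def field_simps)
  have "(norm w)\<^sup>2 \<le> (norm (w + (- complex_of_real s * c) *\<^sub>C y))\<^sup>2"
    using min by (intro power_mono) auto
  also have "\<dots> = (norm w)\<^sup>2 + s\<^sup>2 * (cmod c)\<^sup>2 * (norm y)\<^sup>2 - 2 * s * (cmod c)\<^sup>2"
    using s(1) by (simp add: power2_norm_add norm_scaleC norm_mult cinner_scaleC_right mult.assoc
        cnj_mult_self power_mult_distrib flip: c_def)
  finally have "s * (cmod c)\<^sup>2 * (2 - s * (norm y)\<^sup>2) \<le> 0"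
    by (simp add: algebra_simps power2_eq_square)
  moreover have "0 < s * (cmod c)\<^sup>2 * (2 - s * (norm y)\<^sup>2)"
    using s \<open>cinner w y \<noteq> 0\<close> by (simp add: c_def)
  ultimately show False
    by simp
qed

lemma eq_cinner_if_kernel_orthogonal:
  fixes f :: "'a::chilbert \<Rightarrow> complex"
  assumes lin: "linear f" and scale: "\<And>c x. f (c *\<^sub>C x) = c * f x"
    and w: "f w = 1" and orth: "\<And>y. f y = 0 \<Longrightarrow> cinner w y = 0"
  shows "f x = cinner x (complex_of_real (inverse ((norm w)\<^sup>2)) *\<^sub>C w)"
proof -
  have "w \<noteq> 0"
    using w linear_0[OF lin] by auto
  have "f (x - f x *\<^sub>C w) = 0"
    by (simp add: linear_diff[OF lin] scale w)
  from orth[OF this] have "cinner w x = cnj (f x) * cinner w w"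
    by (simp add: cinner_diff_right cinner_scaleC_right)
  then have "cnj (cinner w x) = f x * complex_of_real ((norm w)\<^sup>2)"
    by (simp add: cinner_self del: cnj_cinner)
  then have "cinner x w = f x * complex_of_real ((norm w)\<^sup>2)"
    by simp
  then show ?thesis
    using \<open>w \<noteq> 0\<close> by (simp add: cinner_scaleC_right)
qed

lemma riesz_representation:
  fixes f :: "'a::chilbert \<Rightarrow> complex"
  assumes add: "\<And>x y. f (x + y) = f x + f y" and scale: "\<And>c x. f (c *\<^sub>C x) = c * f x"
    and bound: "\<And>x. cmod (f x) \<le> norm x * K"
  shows "\<exists>z. \<forall>x. f x = cinner x z"
proof (cases "\<forall>x. f x = 0")
  case True
  then show ?thesis
    by (intro exI[of _ 0]) simp
next
  case False
  then obtain x0 where "f x0 \<noteq> 0"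
    by blast
  have lin: "bounded_linear f"
    by (rule bounded_linear_intro[where K=K])
      (simp_all add: add scale scaleR_scaleC scaleR_conv_of_real bound)
  define C where "C = {v. f v = 1}"
  have "closed C"
    unfolding C_def using lin by (intro closed_Collect_eq continuous_on_const linear_continuous_on)
  moreover have "(1 / f x0) *\<^sub>C x0 \<in> C"
    using \<open>f x0 \<noteq> 0\<close> by (simp add: C_def scale)
  moreover have "(1/2) *\<^sub>R (u + v) \<in> C" if "u \<in> C" "v \<in> C" for u v
    using that by (simp add: C_def scaleR_scaleC scale add)
  ultimately obtain w where "w \<in> C" and "\<forall>v\<in>C. norm w \<le> norm v"
    using closed_midpoint_convex_has_min_norm[of C] by blast
  then have w: "f w = 1" and min: "\<And>v. f v = 1 \<Longrightarrow> norm w \<le> norm v"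
    by (auto simp: C_def)
  have orth: "cinner w y = 0" if "f y = 0" for y
    by (rule cinner_eq_0_if_norm_le_add_scaleC) (simp add: min add scale w that)
  show ?thesis
    using eq_cinner_if_kernel_orthogonal[OF bounded_linear.linear[OF lin] scale w orth] by blast
qed

section \<open>Adjoints and isometries\<close>

lemma cbounded_add: "cbounded T \<Longrightarrow> T (x + y) = T x + T y"
  by (simp add: cbounded_def clinear_def)

lemma cbounded_scaleC: "cbounded T \<Longrightarrow> T (c *\<^sub>C x) = c *\<^sub>C T x"
  by (simp add: cbounded_def clinear_def)

lemma bounded_linear_if_cbounded: "cbounded (T::'a::cnormed \<Rightarrow> 'b::cnormed) \<Longrightarrow> bounded_linear T"
  unfolding cbounded_def
  by (auto intro!: bounded_linear_intro simp: clinear_def scaleR_scaleC)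

lemma cbounded_comp: "cbounded A \<Longrightarrow> cbounded B \<Longrightarrow> cbounded (A \<circ> B)"
  using bounded_linear.bounded[OF bounded_linear_compose[OF bounded_linear_if_cbounded bounded_linear_if_cbounded]]
  by (simp add: cbounded_def clinear_def)

lemma cbounded_id: "cbounded id"
  by (auto simp: cbounded_def clinear_def intro: exI[of _ 1])

lemma cadj_works:
  assumes "cbounded (T::'a::chilbert \<Rightarrow> 'b::chilbert)"
  shows "cinner (T x) y = cinner x (cadj T y)"
proof -
  obtain K where lin: "clinear T" and K: "\<And>x. norm (T x) \<le> norm x * K"
    using assms unfolding cbounded_def by blast
  have "\<exists>z. \<forall>x. cinner (T x) y = cinner x z" for y
  proof (rule riesz_representation[where K="K * norm y"])
    show "cinner (T (x + x')) y = cinner (T x) y + cinner (T x') y" for x x'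
      using lin by (simp add: clinear_def cinner_add_left)
    show "cinner (T (c *\<^sub>C x)) y = c * cinner (T x) y" for c x
      using lin by (simp add: clinear_def cinner_scaleC_left)
    show "cmod (cinner (T x) y) \<le> norm x * (K * norm y)" for x
      using cmod_cinner_le[of "T x" y] mult_right_mono[OF K[of x] norm_ge_zero[of y]]
      by (simp add: mult.assoc)
  qed
  then have "\<exists>T'. \<forall>y x. cinner (T x) y = cinner x (T' y)"
    by (intro choice allI)
  then have "\<exists>T'. \<forall>x y. cinner (T x) y = cinner x (T' y)"
    by blast
  then have "\<forall>x y. cinner (T x) y = cinner x (cadj T y)"
    unfolding cadj_def by (rule someI_ex)
  then show ?thesis
    by blast
qed

lemma cadj_works_left: "cbounded T \<Longrightarrow> cinner (cadj T y) x = cinner y (T x)"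
  using arg_cong[OF cadj_works[of T x y], of cnj] by simp

lemma cadj_unique:
  assumes T': "\<And>x y. cinner (T x) y = cinner x (T' y)"
  shows "cadj T = T'"
proof -
  have "\<forall>x y. cinner (T x) y = cinner x (cadj T y)"
    unfolding cadj_def by (rule someI[where x=T']) (simp add: T')
  then show ?thesis
    by (intro ext cinner_eqI) (metis T')
qed

lemma cbounded_cadj: "cbounded (T::'a::chilbert \<Rightarrow> 'b::chilbert) \<Longrightarrow> cbounded (cadj T)"
proof -
  assume T: "cbounded T"
  obtain K where "K > 0" and K: "\<And>x. norm (T x) \<le> norm x * K"
    using bounded_linear.pos_bounded[OF bounded_linear_if_cbounded[OF T]] by blast
  have "norm (cadj T y) \<le> norm y * K" for y
  proof -
    have "norm (cadj T y) * norm (cadj T y) = Re (cinner (T (cadj T y)) y)"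
      by (simp add: cadj_works[OF T] power2_norm_eq_cinner flip: power2_eq_square)
    also have "\<dots> \<le> norm (T (cadj T y)) * norm y"
      by (rule order_trans[OF complex_Re_le_cmod cmod_cinner_le])
    also have "\<dots> \<le> norm (cadj T y) * (norm y * K)"
      using mult_right_mono[OF K[of "cadj T y"] norm_ge_zero[of y]] by (simp add: ac_simps)
    finally show ?thesis
      using \<open>K > 0\<close> by (cases "cadj T y = 0") (simp_all add: mult_le_cancel_left)
  qed
  moreover have "cadj T (y + z) = cadj T y + cadj T z" for y z
    by (rule cinner_eqI) (simp add: cinner_add_right flip: cadj_works[OF T])
  moreover have "cadj T (c *\<^sub>C y) = c *\<^sub>C cadj T y" for c y
    by (rule cinner_eqI) (simp add: cinner_scaleC_right flip: cadj_works[OF T])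
  ultimately show ?thesis
    unfolding cbounded_def clinear_def by blast
qed

lemma cadj_cadj: "cbounded T \<Longrightarrow> cadj (cadj T) = T"
  by (rule cadj_unique) (rule cadj_works_left)

lemma cadj_comp: "cbounded A \<Longrightarrow> cbounded B \<Longrightarrow> cadj (A \<circ> B) = cadj B \<circ> cadj A"
  by (rule cadj_unique) (simp add: cadj_works)

lemma isometry_cinner:
  assumes "isometry (V::'a::chilbert \<Rightarrow> 'b::chilbert)"
  shows "cinner (V x) (V y) = cinner x y"
proof -
  have V: "cbounded V" "\<And>x. norm (V x) = norm x"
    using assms by (auto simp: isometry_def)
  have Re: "Re (cinner (V x) (V y)) = Re (cinner x y)" for x y
  proof -
    have "(norm (V x + V y))\<^sup>2 = (norm (x + y))\<^sup>2"
      by (simp add: V flip: cbounded_add[OF V(1)])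
    then show ?thesis
      by (simp add: power2_norm_add V(2))
  qed
  have Im_Re: "Im (cinner a b) = Re (cinner a (\<i> *\<^sub>C b))" for a b :: "'c::chilbert"
    by (simp add: cinner_scaleC_right)
  have "Im (cinner (V x) (V y)) = Re (cinner (V x) (V (\<i> *\<^sub>C y)))"
    by (simp add: Im_Re cbounded_scaleC[OF V(1)])
  also have "\<dots> = Im (cinner x y)"
    by (simp add: Re Im_Re)
  finally have "Im (cinner (V x) (V y)) = Im (cinner x y)" .
  with Re[of x y] show ?thesis
    by (rule complex_eqI)
qed

lemma isometry_cadj_apply: "isometry V \<Longrightarrow> cadj V (V x) = x"
  by (rule cinner_eqI) (simp add: isometry_cinner isometry_def flip: cadj_works)

lemma isometry_comp: "isometry A \<Longrightarrow> isometry B \<Longrightarrow> isometry (A \<circ> B)"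
  by (simp add: isometry_def cbounded_comp)

lemma isometry_funpow: "isometry (T::'a::chilbert \<Rightarrow> 'a) \<Longrightarrow> isometry (T ^^ n)"
  by (induction n) (simp_all add: isometry_def cbounded_id cbounded_comp funpow_Suc_right)

lemma isometry_if_cadj_left_inverse:
  assumes T: "cbounded T" and inv: "cadj T \<circ> T = id"
  shows "isometry T"
proof -
  have "(norm (T x))\<^sup>2 = (norm x)\<^sup>2" for x
    using pointfree_idE[OF inv] by (simp add: power2_norm_eq_cinner cadj_works[OF T])
  then show ?thesis
    using T by (simp add: isometry_def power2_eq_iff_nonneg)
qed

lemma unitary_isometry: "unitary U \<Longrightarrow> isometry U"
  by (simp add: unitary_def isometry_if_cadj_left_inverse)

lemma unitary_isometry_cadj: "unitary U \<Longrightarrow> isometry (cadj U)"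
  by (simp add: unitary_def isometry_if_cadj_left_inverse cbounded_cadj cadj_cadj)

lemma upow_minus_of_nat: "upow U (- int k) = cadj U ^^ k"
  by (cases "k = 0") (simp_all add: upow_def)

lemma isometry_upow: "unitary U \<Longrightarrow> isometry (upow U n)"
  by (simp add: upow_def isometry_funpow unitary_isometry unitary_isometry_cadj)

lemma upow_add_one:
  assumes "unitary U"
  shows "upow U (n + 1) = upow U n \<circ> U"
proof (cases "n \<ge> 0")
  case True
  then have "nat (n + 1) = Suc (nat n)"
    by simp
  then show ?thesis
    using True by (simp add: upow_def funpow_Suc_right del: funpow.simps)
next
  case False
  define k where "k = nat (- n - 1)"
  have k: "n = - int (Suc k)"
    using False by (simp add: k_def)
  have "n + 1 = - int k"
    using k by simp
  show ?thesis
    unfolding \<open>n + 1 = - int k\<close> k upow_minus_of_nat funpow_Suc_right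
    using assms by (simp add: comp_assoc unitary_def upow_minus_of_nat)
qed

section \<open>Projections\<close>

lemma projection_isometry_range: "isometry V \<Longrightarrow> is_projection (V \<circ> cadj V)"
  by (simp add: is_projection_def isometry_def cbounded_comp cbounded_cadj cadj_comp cadj_cadj
      fun_eq_iff isometry_cadj_apply o_assoc)

lemma isometry_range_projection_absorb:
  assumes "isometry V" "cbounded T"
  shows "((V \<circ> T) \<circ> cadj (V \<circ> T)) \<circ> (V \<circ> cadj V) = (V \<circ> T) \<circ> cadj (V \<circ> T)"
  using assms by (simp add: isometry_def cadj_comp fun_eq_iff isometry_cadj_apply[OF assms(1)])

lemma projection_idem: "is_projection Q \<Longrightarrow> Q (Q x) = Q x"
  by (metis comp_apply is_projection_def)

lemma projection_cinner_commute: "is_projection Q \<Longrightarrow> cinner (Q x) y = cinner x (Q y)"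
  using cadj_works[of Q x y] by (simp add: is_projection_def)

lemma cinner_projection_self: "is_projection Q \<Longrightarrow> cinner (Q x) x = complex_of_real ((norm (Q x))\<^sup>2)"
  by (metis cinner_self projection_cinner_commute projection_idem)

lemma norm_projection_le:
  assumes "is_projection Q"
  shows "norm (Q x) \<le> norm x"
proof -
  have "(norm (Q x))\<^sup>2 = Re (cinner (Q x) x)"
    by (simp add: cinner_projection_self[OF assms])
  also have "\<dots> \<le> norm (Q x) * norm x"
    by (rule order_trans[OF complex_Re_le_cmod cmod_cinner_le])
  finally have "norm (Q x) * norm (Q x) \<le> norm (Q x) * norm x"
    by (simp add: power2_eq_square)
  then show ?thesis
    by (cases "Q x = 0") (simp_all add: mult_le_cancel_left)
qed

lemma power2_norm_diff_projection:
  assumes "is_projection Q" "is_projection Q'" "Q' \<circ> Q = Q'"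
  shows "(norm (Q x - Q' x))\<^sup>2 = (norm (Q x))\<^sup>2 - (norm (Q' x))\<^sup>2"
proof -
  have "cinner (Q x) (Q' x) = cinner (Q' x) x"
    using projection_cinner_commute[OF assms(2), of "Q x" x] assms(3)
    by (metis cinner_projection_self[OF assms(2)] cnj_cinner complex_cnj_complex_of_real comp_apply)
  then show ?thesis
    by (simp add: power2_norm_diff cinner_projection_self[OF assms(2)])
qed

lemma op_le_projection:
  assumes "is_projection Q" "is_projection Q'" "Q' \<circ> Q = Q'"
  shows "op_le Q' Q"
proof -
  have "norm (Q' x) \<le> norm (Q x)" for x
    using norm_projection_le[OF assms(2), of "Q x"] assms(3) by (metis comp_apply)
  then show ?thesis
    by (simp add: op_le_def cinner_projection_self assms(1,2) power_mono)
qed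

lemma projection_commute_if_invariant:
  assumes Q: "is_projection Q" and T: "cbounded T"
    and inv: "\<And>x. Q (T (Q x)) = T (Q x)" and inv_cadj: "\<And>x. Q (cadj T (Q x)) = cadj T (Q x)"
  shows "Q \<circ> T = T \<circ> Q"
proof (rule ext, rule cinner_eqI_left)
  fix x y
  have "cinner (Q (T x)) y = cinner x (cadj T (Q y))"
    by (simp add: projection_cinner_commute[OF Q] cadj_works[OF T])
  also have "\<dots> = cinner (Q x) (cadj T (Q y))"
    by (metis inv_cadj projection_cinner_commute[OF Q])
  also have "\<dots> = cinner (T (Q x)) y"
    by (metis cadj_works[OF T] inv projection_cinner_commute[OF Q])
  finally show "cinner ((Q \<circ> T) x) y = cinner ((T \<circ> Q) x) y"
    by simp
qed

lemma decreasing_projections_absorb: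
  assumes "\<And>k. is_projection (Q k)" and dec: "\<And>k. Q (Suc k) \<circ> Q k = Q (Suc k)" and "k \<le> l"
  shows "Q l \<circ> Q k = Q l"
  using \<open>k \<le> l\<close>
proof (induction rule: dec_induct)
  case base
  show ?case
    using assms(1)[of k] by (simp add: is_projection_def)
next
  case (step l)
  then show ?case
    by (metis dec fun.map_comp)
qed

lemma decreasing_projections_convergent:
  assumes proj: "\<And>k. is_projection (Q k)" and dec: "\<And>k. Q (Suc k) \<circ> Q k = Q (Suc k)"
  shows "convergent (\<lambda>k. Q k x)"
proof -
  define c where "c k = (norm (Q k x))\<^sup>2" for k
  have diff: "(norm (Q k x - Q l x))\<^sup>2 = c k - c l" if "k \<le> l" for k l
    unfolding c_def
    by (rule power2_norm_diff_projection[OF proj proj decreasing_projections_absorb[of Q, OF proj dec that]])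
  have "decseq c"
    using diff by (intro decseq_SucI) (metis le_SucI order_refl zero_le_power2 diff_ge_0_iff_ge)
  then obtain L where "c \<longlonglongrightarrow> L"
    by (rule decseq_convergent[of c 0]) (auto simp: c_def)
  then have "Cauchy c"
    by (rule LIMSEQ_imp_Cauchy)
  have "Cauchy (\<lambda>k. Q k x)"
  proof (rule metric_CauchyI)
    fix e :: real
    assume "0 < e"
    then obtain M where M: "\<And>m n. m \<ge> M \<Longrightarrow> n \<ge> M \<Longrightarrow> dist (c m) (c n) < e\<^sup>2"
      using metric_CauchyD[OF \<open>Cauchy c\<close>, of "e\<^sup>2"] by auto
    have close: "norm (Q m x - Q n x) < e" if "m \<ge> M" "n \<ge> M" "m \<le> n" for m n
      using diff[OF that(3)] M[OF that(1,2)] \<open>0 < e\<close>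
      by (intro power2_less_imp_less[of "norm (Q m x - Q n x)"]) (auto simp: dist_real_def)
    have "dist (Q m x) (Q n x) < e" if "m \<ge> M" "n \<ge> M" for m n
      using that nat_le_linear[of m n] close[of m n] close[of n m]
      by (auto simp: dist_norm norm_minus_commute)
    then show "\<exists>M. \<forall>m\<ge>M. \<forall>n\<ge>M. dist (Q m x) (Q n x) < e"
      by blast
  qed
  then show ?thesis
    by (rule Cauchy_convergent)
qed

lemma tendsto_id_if_eventually_fixes_dense:
  fixes Q :: "'i \<Rightarrow> 'a::real_normed_vector \<Rightarrow> 'a"
  assumes lin: "\<And>i. linear (Q i)" and contr: "\<And>i x. norm (Q i x) \<le> norm x"
    and dense: "closure D = UNIV" and fixed: "\<And>y. y \<in> D \<Longrightarrow> eventually (\<lambda>i. Q i y = y) F"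
  shows "((\<lambda>i. Q i x) \<longlongrightarrow> x) F"
proof (rule tendstoI)
  fix e :: real
  assume "0 < e"
  then obtain y where "y \<in> D" and y: "dist y x < e / 2"
    using dense closure_approachable[of x D] by (metis UNIV_I half_gt_zero)
  show "eventually (\<lambda>i. dist (Q i x) x < e) F"
    using fixed[OF \<open>y \<in> D\<close>]
  proof eventually_elim
    case (elim i)
    have "norm (Q i x - x) = norm (Q i (x - y) + (y - x))"
      by (simp add: linear_diff[OF lin] elim)
    also have "\<dots> \<le> norm (x - y) + norm (y - x)"
      using contr[of i "x - y"] norm_triangle_ineq[of "Q i (x - y)" "y - x"] by linarith
    also have "\<dots> < e"
      using y by (simp add: dist_norm norm_minus_commute)
    finally show ?case
      by (simp add: dist_norm)
  qed
qed

section \<open>Commutants\<close>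

lemma bounded_linear_representation_apply:
  assumes "representation \<pi>"
  shows "bounded_linear (\<lambda>a. \<pi> a v)"
proof (rule bounded_linear_intro[where K="norm v"])
  show "\<pi> (a + b) v = \<pi> a v + \<pi> b v" for a b
    using assms by (simp add: representation_def)
  show "\<pi> (r *\<^sub>R a) v = r *\<^sub>R \<pi> a v" for r a
    using assms by (simp add: representation_def scaleR_scaleC)
  show "norm (\<pi> a v) \<le> norm a * norm v" for a
    using assms by (simp add: representation_def)
qed

lemma commutant_range_if_commutes_on_dense:
  assumes \<pi>: "representation \<pi>" and Q: "cbounded Q" and dense: "closure D = UNIV"
    and comm: "\<And>b x. b \<in> D \<Longrightarrow> Q (\<pi> b x) = \<pi> b (Q x)"
  shows "Q \<in> commutant (range \<pi>)"
proof -
  have "Q (\<pi> b x) = \<pi> b (Q x)" for b x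
  proof -
    have "closed {b. Q (\<pi> b x) = \<pi> b (Q x)}"
      using bounded_linear_compose[OF bounded_linear_if_cbounded[OF Q] bounded_linear_representation_apply[OF \<pi>]]
        bounded_linear_representation_apply[OF \<pi>]
      by (intro closed_Collect_eq linear_continuous_on) auto
    then have "closure D \<subseteq> {b. Q (\<pi> b x) = \<pi> b (Q x)}"
      using comm by (intro closure_minimal) auto
    then show ?thesis
      using dense by auto
  qed
  then show ?thesis
    using Q by (auto simp: commutant_def fun_eq_iff)
qed

lemma strong_limit_in_commutant:
  fixes Q :: "nat \<Rightarrow> 'a::chilbert \<Rightarrow> 'a"
  assumes comm: "\<And>k. Q k \<in> commutant M" and contr: "\<And>k x. norm (Q k x) \<le> norm x"
    and lim: "\<And>x. (\<lambda>k. Q k x) \<longlonglongrightarrow> L x" and M: "\<And>A. A \<in> M \<Longrightarrow> cbounded A"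
  shows "L \<in> commutant M"
proof -
  have Q: "cbounded (Q k)" for k
    using comm by (simp add: commutant_def)
  have add: "L (x + y) = L x + L y" for x y
    using lim[of "x + y"] tendsto_add[OF lim lim] by (simp add: cbounded_add[OF Q] LIMSEQ_unique)
  have scale: "L (c *\<^sub>C x) = c *\<^sub>C L x" for c x
    using lim[of "c *\<^sub>C x"] bounded_linear.tendsto[OF bounded_linear_scaleC lim]
    by (simp add: cbounded_scaleC[OF Q] LIMSEQ_unique)
  have "norm (L x) \<le> norm x * 1" for x
    using tendsto_norm[OF lim[of x]] by (simp add: LIMSEQ_le_const2 contr)
  with add scale have "cbounded L"
    unfolding cbounded_def clinear_def by blast
  moreover have "L (A x) = A (L x)" if "A \<in> M" for A x
  proof -
    have "Q k (A x) = A (Q k x)" for k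
      using comm[of k] that by (auto simp: commutant_def fun_eq_iff)
    then show ?thesis
      using lim[of "A x"] bounded_linear.tendsto[OF bounded_linear_if_cbounded[OF M[OF that]] lim]
      by (simp add: LIMSEQ_unique)
  qed
  ultimately show ?thesis
    by (simp add: commutant_def fun_eq_iff)
qed

section \<open>The projections of the inductive limit\<close>

locale inductive_limit_covariant_rep =
  fixes \<alpha> :: "'a::cstar_algebra \<Rightarrow> 'a"
    and \<phi> :: "nat \<Rightarrow> 'a \<Rightarrow> 'b::cstar_algebra"
    and \<pi> :: "'a \<Rightarrow> 'h::chilbert \<Rightarrow> 'h"
    and W :: "'h \<Rightarrow> 'h"
    and S :: "nat \<Rightarrow> 'h \<Rightarrow> 'k::chilbert"
    and W_inf :: "'k \<Rightarrow> 'k"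
    and \<pi>_inf :: "'b \<Rightarrow> 'k \<Rightarrow> 'k"
    and P :: "int \<Rightarrow> 'k \<Rightarrow> 'k"
  assumes phi_hom: "\<And>n. unital_star_hom (\<phi> n)"
    and phi_compat: "\<And>n. \<phi> (Suc n) \<circ> \<alpha> = \<phi> n"
    and phi_dense: "closure (\<Union>n. range (\<phi> n)) = UNIV"
    and W_isom: "isometry W"
    and W_proj_comm: "\<And>k. (W ^^ k) \<circ> cadj (W ^^ k) \<in> commutant (range \<pi>)"
    and S_isom: "\<And>n. isometry (S n)"
    and S_compat: "\<And>n. S (Suc n) \<circ> W = S n"
    and S_dense: "closure (\<Union>n. range (S n)) = UNIV"
    and Winf_unitary: "unitary W_inf"
    and Winf_S: "\<And>n. W_inf \<circ> S (Suc n) = S n"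
    and pi_inf_rep: "representation \<pi>_inf"
    and pi_inf_S: "\<And>n a. \<pi>_inf (\<phi> n a) \<circ> S n = S n \<circ> \<pi> a"
    and P_def: "\<And>n. P n = upow W_inf n \<circ> (S 0 \<circ> cadj (S 0)) \<circ> cadj (upow W_inf n)"
begin

definition V :: "int \<Rightarrow> 'h \<Rightarrow> 'k" where
  "V n = upow W_inf n \<circ> S 0"

lemma isometry_V: "isometry (V n)"
  by (simp add: V_def isometry_comp isometry_upow Winf_unitary S_isom)

lemma P_eq_V: "P n = V n \<circ> cadj (V n)"
  using isometry_upow[OF Winf_unitary] S_isom
  by (simp add: P_def V_def cadj_comp isometry_def o_assoc)

lemma P_projection: "is_projection (P n)"
  unfolding P_eq_V by (rule projection_isometry_range[OF isometry_V])

lemma P_fixes_range_V: "P n (V n h) = V n h"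
  by (simp add: P_eq_V isometry_cadj_apply[OF isometry_V])

lemma V_add_one: "V (n + 1) = V n \<circ> W"
proof -
  have "W_inf \<circ> S 0 = S 0 \<circ> W"
    using Winf_S[of 0] S_compat[of 0] by (metis comp_assoc)
  then show ?thesis
    by (simp add: V_def upow_add_one[OF Winf_unitary] comp_assoc)
qed

lemma V_of_nat: "V (int j) = S 0 \<circ> W ^^ j"
proof (induction j)
  case 0
  show ?case
    by (simp add: V_def upow_def)
next
  case (Suc j)
  have "V (int (Suc j)) = V (int j + 1)"
    by (simp add: add.commute)
  then show ?case
    by (simp only: V_add_one Suc funpow_Suc_right o_assoc)
qed

lemma V_minus_of_nat: "V (- int k) = S k"
proof (induction k)
  case 0
  show ?case
    by (simp add: V_def upow_def)
next
  case (Suc k)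
  have "cadj W_inf \<circ> S k = cadj W_inf \<circ> (W_inf \<circ> S (Suc k))"
    by (simp only: Winf_S)
  also have "\<dots> = S (Suc k)"
    using Winf_unitary by (simp add: unitary_def o_assoc)
  finally have "cadj W_inf \<circ> S k = S (Suc k)" .
  moreover have "V (- int (Suc k)) = cadj W_inf \<circ> V (- int k)"
    by (simp only: V_def upow_minus_of_nat funpow.simps(2) o_assoc)
  ultimately show ?case
    using Suc by simp
qed

lemma S_comp_W_pow: "S (k + i) \<circ> W ^^ i = S k"
  by (induction i) (simp, simp only: add_Suc_right funpow.simps(2) o_assoc S_compat)

lemma V_eq_S_comp_W_pow: "\<exists>k j. V n = S k \<circ> W ^^ j"
proof (cases "n \<ge> 0")
  case True
  then show ?thesis
    using V_of_nat[of "nat n"] by auto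
next
  case False
  then have "V n = S (nat (- n)) \<circ> W ^^ 0"
    using V_minus_of_nat[of "nat (- n)"] by simp
  then show ?thesis
    by blast
qed

lemma phi_comp_alpha_pow: "\<phi> (m + i) \<circ> \<alpha> ^^ i = \<phi> m"
  by (induction i) (simp, simp only: add_Suc_right funpow.simps(2) o_assoc phi_compat)

text \<open>Lifting both sides to level \<open>k + m\<close> reduces this to the invariance of the range
  of \<open>W ^^ (m + j)\<close> under \<open>\<pi>\<close>.\<close>

lemma pi_inf_phi_S_W_pow: "\<exists>g. \<pi>_inf (\<phi> m a) (S k ((W ^^ j) h)) = S k ((W ^^ j) g)"
proof -
  define a' where "a' = (\<alpha> ^^ k) a"
  define J where "J = m + j"
  have a': "\<phi> m a = \<phi> (k + m) a'"
    using fun_cong[OF phi_comp_alpha_pow[of m k], of a] by (simp add: a'_def add.commute)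
  have S: "S k ((W ^^ j) y) = S (k + m) ((W ^^ J) y)" for y
    using fun_cong[OF S_comp_W_pow[of k m], of "(W ^^ j) y"] by (simp add: J_def funpow_add)
  have "(W ^^ J) (cadj (W ^^ J) (\<pi> a' ((W ^^ J) h))) = \<pi> a' ((W ^^ J) (cadj (W ^^ J) ((W ^^ J) h)))"
    using W_proj_comm[of J] by (auto simp: commutant_def fun_eq_iff)
  also have "\<dots> = \<pi> a' ((W ^^ J) h)"
    by (simp add: isometry_cadj_apply[OF isometry_funpow[OF W_isom]])
  finally have "\<pi>_inf (\<phi> m a) (S k ((W ^^ j) h)) = S k ((W ^^ j) (cadj (W ^^ J) (\<pi> a' ((W ^^ J) h))))"
    using fun_cong[OF pi_inf_S[of "k + m" a'], of "(W ^^ J) h"] by (simp add: a' S)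
  then show ?thesis
    by blast
qed

lemma P_range_invariant: "P n (\<pi>_inf (\<phi> m a) (P n x)) = \<pi>_inf (\<phi> m a) (P n x)"
proof -
  obtain k j where V: "V n = S k \<circ> W ^^ j"
    using V_eq_S_comp_W_pow by blast
  obtain g where "\<pi>_inf (\<phi> m a) (S k ((W ^^ j) (cadj (V n) x))) = S k ((W ^^ j) g)"
    using pi_inf_phi_S_W_pow by blast
  then have "\<pi>_inf (\<phi> m a) (P n x) = V n g"
    by (simp add: P_eq_V V)
  then show ?thesis
    by (simp add: P_fixes_range_V)
qed

lemma P_commutant: "P n \<in> commutant (range \<pi>_inf)"
proof (rule commutant_range_if_commutes_on_dense[OF pi_inf_rep _ phi_dense])
  show "cbounded (P n)"
    using P_projection by (simp add: is_projection_def)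
  fix b x
  assume "b \<in> (\<Union>m. range (\<phi> m))"
  then obtain m a where b: "b = \<phi> m a"
    by blast
  have "cadj (\<pi>_inf (\<phi> m a)) = \<pi>_inf (\<phi> m (invol a))"
    using pi_inf_rep phi_hom[of m] by (simp add: representation_def unital_star_hom_def)
  then have "P n \<circ> \<pi>_inf (\<phi> m a) = \<pi>_inf (\<phi> m a) \<circ> P n"
    using pi_inf_rep
    by (intro projection_commute_if_invariant[OF P_projection]) (simp_all add: representation_def P_range_invariant)
  then show "P n (\<pi>_inf b x) = \<pi>_inf b (P n x)"
    by (simp add: b fun_eq_iff)
qed

lemma P_decreasing: "P (n + 1) \<circ> P n = P (n + 1)"
  unfolding P_eq_V V_add_one
  by (rule isometry_range_projection_absorb[OF isometry_V]) (simp add: W_isom[unfolded isometry_def])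

lemma P_le: "op_le (P (n + 1)) (P n)"
  by (rule op_le_projection[OF P_projection P_projection P_decreasing])

lemma P_tendsto_at_bot: "((\<lambda>n. P n x) \<longlongrightarrow> x) at_bot"
proof (rule tendsto_id_if_eventually_fixes_dense[OF _ _ S_dense])
  show "linear (P n)" for n
    using P_projection by (simp add: is_projection_def bounded_linear_if_cbounded bounded_linear.linear)
  show "norm (P n y) \<le> norm y" for n y
    by (rule norm_projection_le[OF P_projection])
  fix y
  assume "y \<in> (\<Union>k. range (S k))"
  then obtain k h where y: "y = S k h"
    by blast
  have "P n y = y" if "n \<le> - int k" for n
  proof -
    define j where "j = nat (- n)"
    have "n = - int j" "j = k + (j - k)"
      using that by (auto simp: j_def)
    then have "y = V n ((W ^^ (j - k)) h)"
      using fun_cong[OF S_comp_W_pow[of k "j - k"], of h] by (simp add: y V_minus_of_nat)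
    then show ?thesis
      by (simp add: P_fixes_range_V)
  qed
  then show "eventually (\<lambda>n. P n y = y) at_bot"
    unfolding eventually_at_bot_linorder by blast
qed

lemma P_strong_limit_at_top:
  "\<exists>P_inf. (\<forall>x. ((\<lambda>n. P n x) \<longlongrightarrow> P_inf x) at_top) \<and> P_inf \<in> commutant (range \<pi>_inf)"
proof -
  have dec: "P (int (Suc k)) \<circ> P (int k) = P (int (Suc k))" for k
    using P_decreasing[of "int k"] by (simp add: add.commute)
  define P_inf where "P_inf x = lim (\<lambda>k. P (int k) x)" for x
  have lim: "(\<lambda>k. P (int k) x) \<longlonglongrightarrow> P_inf x" for x
    unfolding P_inf_def convergent_LIMSEQ_iff[symmetric]
    by (rule decreasing_projections_convergent[of "\<lambda>k. P (int k)", OF P_projection dec])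
  have "P_inf \<in> commutant (range \<pi>_inf)"
  proof (rule strong_limit_in_commutant[of "\<lambda>k. P (int k)"])
    show "P (int k) \<in> commutant (range \<pi>_inf)" for k
      by (rule P_commutant)
    show "norm (P (int k) x) \<le> norm x" for k x
      by (rule norm_projection_le[OF P_projection])
    show "cbounded A" if "A \<in> range \<pi>_inf" for A
      using that pi_inf_rep by (auto simp: representation_def)
  qed (rule lim)
  moreover have "((\<lambda>n. P n x) \<longlongrightarrow> P_inf x) at_top" for x
    using lim[of x] by (rule filterlim_int_of_nat_at_topD)
  ultimately show ?thesis
    by blast
qed

end

theorem proposition2p5:
  fixes \<alpha> :: "'a::cstar_algebra \<Rightarrow> 'a"
    and \<phi> :: "nat \<Rightarrow> 'a \<Rightarrow> 'b::cstar_algebra"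
    and \<pi> :: "'a \<Rightarrow> 'h::chilbert \<Rightarrow> 'h"
    and W :: "'h \<Rightarrow> 'h"
    and S :: "nat \<Rightarrow> 'h \<Rightarrow> 'k::chilbert"
    and W_inf :: "'k \<Rightarrow> 'k"
    and \<pi>_inf :: "'b \<Rightarrow> 'k \<Rightarrow> 'k"
    and P :: "int \<Rightarrow> 'k \<Rightarrow> 'k"
  assumes alpha_hom: "unital_star_hom \<alpha>" and alpha_inj: "inj \<alpha>"
    and phi_hom: "\<And>n. unital_star_hom (\<phi> n)"
    and phi_isom: "\<And>n a. norm (\<phi> n a) = norm a"
    and phi_compat: "\<And>n. \<phi> (Suc n) \<circ> \<alpha> = \<phi> n"
    and phi_dense: "closure (\<Union>n. range (\<phi> n)) = UNIV"
    and pi_rep: "representation \<pi>"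
    and W_isom: "isometry W"
    and covariant: "\<And>a. \<pi> (\<alpha> a) \<circ> W = W \<circ> \<pi> a"
    and W_proj_comm: "\<And>k. (W ^^ k) \<circ> cadj (W ^^ k) \<in> commutant (range \<pi>)"
    and S_isom: "\<And>n. isometry (S n)"
    and S_compat: "\<And>n. S (Suc n) \<circ> W = S n"
    and S_dense: "closure (\<Union>n. range (S n)) = UNIV"
    and Winf_unitary: "unitary W_inf"
    and Winf_S: "\<And>n. W_inf \<circ> S (Suc n) = S n"
    and pi_inf_rep: "representation \<pi>_inf"
    and pi_inf_S: "\<And>n a. \<pi>_inf (\<phi> n a) \<circ> S n = S n \<circ> \<pi> a"
    and P_def: "\<And>n. P n = upow W_inf n \<circ> (S 0 \<circ> cadj (S 0)) \<circ> cadj (upow W_inf n)"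
  shows "(\<forall>n. is_projection (P n)) \<and> (\<forall>n. op_le (P (n + 1)) (P n))
    \<and> (\<exists>P_inf. (\<forall>x. ((\<lambda>n. P n x) \<longlongrightarrow> P_inf x) at_top)
            \<and> P_inf \<in> commutant (range \<pi>_inf))
    \<and> (\<forall>x. ((\<lambda>n. P n x) \<longlongrightarrow> x) at_bot)
    \<and> (\<forall>n. P n \<in> commutant (range \<pi>_inf))"
proof -
  interpret inductive_limit_covariant_rep \<alpha> \<phi> \<pi> W S W_inf \<pi>_inf P
    by unfold_locales (fact assms)+
  show ?thesis
    using P_projection P_le P_strong_limit_at_top P_tendsto_at_bot P_commutant by blast
qed

end
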